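(* Let $S=\frac1n\sum_{i=1}^n\mathbf x_i\mathbf x_i^\top$ and let $k,k'\ge0$ be integers. Let $\Lambda=\sum_{j=1}^d\lambda_j^\Lambda\mathbf u_j\mathbf u_j^\top$ and $\Gamma=\sum_{j=1}^d\lambda_j^\Gamma\mathbf u_j\mathbf u_j^\top$. Then there are scalars $\beta_1,\dots,\beta_5$ such that $$\mathbb E\big[S\Lambda S^k\Gamma S^{k'}\big]=\beta_1\Lambda\Gamma+\beta_2\operatorname{tr}(\Lambda)\Gamma+\beta_3\operatorname{tr}(\Gamma)\Lambda+\beta_4\operatorname{tr}(\Lambda)\operatorname{tr}(\Gamma)I+\beta_5\operatorname{tr}(\Lambda\Gamma)I.$$
   Context: $\mathbf x_1,\dots,\mathbf x_n$ are i.i.d. $\mathcal N(0,I_d)$. $\{\mathbf u_j\}_{j=1}^d$ is an orthonormal basis of $\mathbb R^d$, and $\lambda_j^\Lambda,\lambda_j^\Gamma$ are real numbers. *)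

theory Defs
  imports "HOL-Analysis.Analysis" "HOL-Probability.Probability"
begin

definition outer :: "real^'d \<Rightarrow> real^'d^'d" where
  "outer u = (\<chi> i j. u $ i * u $ j)"

primrec mat_pow :: "real^'d^'d \<Rightarrow> nat \<Rightarrow> real^'d^'d" where
  "mat_pow A 0 = mat 1"
| "mat_pow A (Suc k) = A ** mat_pow A k"

definition orthonormal_basis :: "('d::finite \<Rightarrow> real^'d) \<Rightarrow> bool" where
  "orthonormal_basis u \<longleftrightarrow> (\<forall>i j. u i \<bullet> u j = (if i = j then 1 else 0))"

text \<open>Sample space for x_1,...,x_n i.i.d. N(0, I_d): all n*d coordinates
  (i,j) with i < n are i.i.d. standard normal.\<close>
definition gauss_sample :: "nat \<Rightarrow> ((nat \<times> 'd::finite) \<Rightarrow> real) measure" where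
  "gauss_sample n = PiM ({..<n} \<times> UNIV) (\<lambda>_. std_normal_distribution)"

text \<open>The i-th sample vector x_{i+1} (0-based index i < n).\<close>
definition sample_vec :: "((nat \<times> 'd::finite) \<Rightarrow> real) \<Rightarrow> nat \<Rightarrow> real^'d" where
  "sample_vec \<omega> i = (\<chi> j. \<omega> (i, j))"

definition sample_cov :: "nat \<Rightarrow> ((nat \<times> 'd::finite) \<Rightarrow> real) \<Rightarrow> real^'d^'d" where
  "sample_cov n \<omega> = (1 / real n) *\<^sub>R (\<Sum>i<n. outer (sample_vec \<omega> i))"

end

theory Submission
  imports Defs
begin

text \<open>
  Write \<open>E(A, B)\<close> for the expectation of \<open>S A S^k B S^k'\<close>. Every entry of the integrand is a
  polynomial in the i.i.d. standard normal coordinates of the sample, i.e. a combination of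
  products of linear forms. By polarization a product of \<open>m\<close> linear forms is \<open>1/m!\<close> times an
  \<open>m\<close>-fold finite difference of \<open>m\<close>-th powers of linear forms, and a linear form with coefficient
  vector \<open>c\<close> is \<open>N(0, |c|^2)\<close>, so its moments depend only on \<open>|c|\<close>. Hence the expectation of a
  polynomial does not change when every sample vector is rotated by the same orthogonal \<open>Q\<close>,
  which gives \<open>E(Q A Q^T, Q B Q^T) = Q E(A, B) Q^T\<close>. Since \<open>\<Lambda>\<close> and \<open>\<Gamma>\<close> are diagonalized
  by the same orthogonal matrix, it remains to treat diagonal \<open>A = diag v\<close>, \<open>B = diag w\<close>.
  Conjugating with sign changes shows that \<open>E(diag v, diag w)\<close> is diagonal; its entries are
  \<open>\<Sum>\<^sub>j \<Sum>\<^sub>l v j * w l * T(j, l, a)\<close>, and conjugating with permutation matrices shows that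
  \<open>T(j, l, a)\<close> only depends on which of \<open>j, l, a\<close> coincide. The five possible coincidence
  patterns yield the five coefficients.
\<close>

section \<open>Finite differences and polarization\<close>

primrec fin_diff :: "real list \<Rightarrow> (real \<Rightarrow> real) \<Rightarrow> real \<Rightarrow> real" where
  "fin_diff [] f s = f s"
| "fin_diff (z # zs) f s = fin_diff zs f (s + z) - fin_diff zs f s"

lemma fin_diff_sum:
  "fin_diff zs (\<lambda>t. \<Sum>k\<in>K. a k * g k t) s = (\<Sum>k\<in>K. a k * fin_diff zs (g k) s)"
  by (induction zs arbitrary: s) (simp_all add: sum_subtractf right_diff_distrib)

lemma fin_diff_shift_diff:
  "fin_diff zs (\<lambda>t. f (t + z) - f t) s = fin_diff zs f (s + z) - fin_diff zs f s"
proof (induction zs arbitrary: s)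
  case (Cons y ys)
  show ?case by (simp add: Cons.IH ac_simps)
qed simp

lemma fin_diff_power:
  assumes "q \<le> length zs"
  shows "fin_diff zs (\<lambda>x. x ^ q) s = (if q = length zs then fact q * prod_list zs else 0)"
  using assms
proof (induction zs arbitrary: q s)
  case Nil
  then show ?case by simp
next
  case (Cons z zs)
  have binomial: "(t + z) ^ q - t ^ q = (\<Sum>i<q. (of_nat (q choose i) * z ^ (q - i)) * t ^ i)" for t
    by (simp add: binomial_ring[of t z q] lessThan_Suc_atMost[symmetric] algebra_simps)
  have "fin_diff (z # zs) (\<lambda>x. x ^ q) s = fin_diff zs (\<lambda>t. (t + z) ^ q - t ^ q) s"
    by (simp add: fin_diff_shift_diff[of _ "\<lambda>x. x ^ q"])
  also have "\<dots> = (\<Sum>i<q. (of_nat (q choose i) * z ^ (q - i)) * fin_diff zs (\<lambda>x. x ^ i) s)"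
    by (simp only: binomial fin_diff_sum)
  also have "\<dots> = (if q = length (z # zs) then fact q * prod_list (z # zs) else 0)"
  proof (cases "q = length (z # zs)")
    case True
    then have "(\<Sum>i<q. (of_nat (q choose i) * z ^ (q - i)) * fin_diff zs (\<lambda>x. x ^ i) s)
        = (\<Sum>i\<in>{length zs}. (of_nat (q choose i) * z ^ (q - i)) * fin_diff zs (\<lambda>x. x ^ i) s)"
      by (intro sum.mono_neutral_right) (auto simp: Cons.IH)
    with True show ?thesis by (simp add: Cons.IH algebra_simps)
  next
    case False
    with Cons.prems show ?thesis by (auto simp: Cons.IH intro!: sum.neutral)
  qed
  finally show ?case .
qed

lemma prod_list_eq_fin_diff_power:
  "prod_list zs = fin_diff zs (\<lambda>x. x ^ length zs) 0 / fact (length zs)"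
  by (simp add: fin_diff_power)

section \<open>Functions of triples invariant under bijections\<close>

lemma inj_on_extends_to_bij:
  fixes f :: "'a::finite \<Rightarrow> 'a"
  assumes "inj_on f A"
  obtains \<pi> where "bij \<pi>" "\<And>x. x \<in> A \<Longrightarrow> \<pi> x = f x"
proof -
  have "card (- A) = card (- f ` A)"
    using assms by (simp add: Compl_eq_Diff_UNIV card_Diff_subset card_image)
  then obtain h where h: "bij_betw h (- A) (- f ` A)"
    by (metis finite_same_card_bij finite)
  let ?\<pi> = "\<lambda>x. if x \<in> A then f x else h x"
  have "bij_betw ?\<pi> A (f ` A) \<longleftrightarrow> bij_betw f A (f ` A)"
    by (rule bij_betw_cong) simp
  then have "bij_betw ?\<pi> A (f ` A)"
    using assms by (simp add: inj_on_imp_bij_betw)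
  moreover have "bij_betw ?\<pi> (- A) (- f ` A) \<longleftrightarrow> bij_betw h (- A) (- f ` A)"
    by (rule bij_betw_cong) simp
  then have "bij_betw ?\<pi> (- A) (- f ` A)"
    using h by simp
  ultimately have "bij_betw ?\<pi> (A \<union> - A) (f ` A \<union> - f ` A)"
    by (rule bij_betw_combine) blast
  then have "bij ?\<pi>" by simp
  then show ?thesis by (rule that) simp
qed

lemma bij_invariant_depends_on_eq_pattern:
  fixes F :: "'a::finite \<Rightarrow> 'a \<Rightarrow> 'a \<Rightarrow> 'b"
  assumes "\<And>\<pi> j l a. bij \<pi> \<Longrightarrow> F (\<pi> j) (\<pi> l) (\<pi> a) = F j l a"
  obtains g where "\<And>j l a. F j l a = g (j = l) (l = a) (j = a)"
proof -
  define g where "g p q r = (SOME y. \<exists>j l a. (j = l) = p \<and> (l = a) = q \<and> (j = a) = r \<and> y = F j l a)"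
    for p q r
  have "F j l a = g (j = l) (l = a) (j = a)" for j l a
  proof -
    obtain j' l' a' where pattern: "(j' = l') = (j = l)" "(l' = a') = (l = a)" "(j' = a') = (j = a)"
      and g: "g (j = l) (l = a) (j = a) = F j' l' a'"
      using someI_ex[of "\<lambda>y. \<exists>j' l' a'. (j' = l') = (j = l) \<and> (l' = a') = (l = a) \<and> (j' = a') = (j = a)
                                 \<and> y = F j' l' a'"]
      unfolding g_def by blast
    define \<phi> where "\<phi> x = (if x = j then j' else if x = l then l' else a')" for x
    have "inj_on \<phi> {j, l, a}"
      using pattern by (auto simp: \<phi>_def inj_on_def)
    then obtain \<pi> where "bij \<pi>" "\<And>x. x \<in> {j, l, a} \<Longrightarrow> \<pi> x = \<phi> x"
      by (rule inj_on_extends_to_bij) blast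
    moreover have "\<phi> j = j'" "\<phi> l = l'" "\<phi> a = a'"
      using pattern by (auto simp: \<phi>_def)
    ultimately have "F j' l' a' = F j l a"
      using assms[of \<pi> j l a] by simp
    with g show ?thesis by simp
  qed
  then show ?thesis by (rule that)
qed

lemma matrix_add_rdistrib: "(B + C) ** A = B ** A + C ** (A :: 'a::semiring_1^'n^'m)"
  by (simp add: vec_eq_iff matrix_matrix_mult_def sum.distrib[symmetric] algebra_simps)

lemma matrix_mult_sum_left: "(\<Sum>i\<in>I. B i) ** (A :: 'a::semiring_1^'n^'m) = (\<Sum>i\<in>I. B i ** A)"
  by (induction I rule: infinite_finite_induct) (simp_all add: matrix_add_rdistrib)

lemma matrix_mult_sum_right: "(A :: 'a::semiring_1^'n^'m) ** (\<Sum>i\<in>I. B i) = (\<Sum>i\<in>I. A ** B i)"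
  by (induction I rule: infinite_finite_induct) (simp_all add: matrix_add_ldistrib)

lemma bounded_linear_matrix_sandwich: "bounded_linear (\<lambda>X :: real^'n^'m. M ** X ** N)"
proof -
  have "linear (\<lambda>X :: real^'n^'m. M ** X ** N)"
    by (rule linearI)
      (simp_all add: matrix_add_ldistrib matrix_add_rdistrib matrix_scalar_ac scalar_matrix_assoc[symmetric])
  then show ?thesis by (simp add: linear_conv_bounded_linear)
qed

lemma mat_pow_conj:
  assumes "orthogonal_matrix Q"
  shows "mat_pow (Q ** S ** transpose Q) k = Q ** mat_pow S k ** transpose Q"
proof (induction k)
  case 0
  show ?case using assms by (simp add: orthogonal_matrix_def)
next
  case (Suc k)
  have "transpose Q ** Q = mat 1" using assms by (simp add: orthogonal_matrix_def)
  then show ?case by (simp add: Suc matrix_mul_assoc) (metis matrix_mul_assoc matrix_mul_rid)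
qed

lemma outer_matrix_vector_mult: "outer (Q *v x) = Q ** outer x ** transpose Q"
  by (simp add: vec_eq_iff outer_def matrix_matrix_mult_def matrix_vector_mult_def transpose_def
      sum_product sum_distrib_left sum_distrib_right mult_ac)

lemma inner_vector_matrix_mult_orthogonal:
  assumes "orthogonal_matrix Q"
  shows "(x v* Q) \<bullet> (x v* Q) = x \<bullet> (x :: real^'n)"
proof -
  have "Q *v (x v* Q) = x"
    using assms
    by (metis transpose_matrix_vector matrix_vector_mul_assoc matrix_vector_mul_lid orthogonal_matrix_def)
  then show ?thesis by (simp only: dot_lmul_matrix)
qed

lemma orthogonal_matrix_of_orthonormal_basis:
  assumes "orthonormal_basis u"
  shows "orthogonal_matrix (\<chi> a j. u j $ a)"
proof -
  have "(transpose (\<chi> a j. u j $ a) ** (\<chi> a j. u j $ a)) $ i $ j = u i \<bullet> u j" for i j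
    by (simp add: matrix_matrix_mult_def transpose_def inner_vec_def)
  with assms show ?thesis
    by (simp add: orthogonal_matrix vec_eq_iff orthonormal_basis_def mat_def)
qed

lemma integrable_euclidean_componentwise:
  fixes f :: "'a \<Rightarrow> 'b::euclidean_space"
  assumes "\<And>b. b \<in> Basis \<Longrightarrow> integrable M (\<lambda>x. f x \<bullet> b)"
  shows "integrable M f"
proof -
  have "integrable M (\<lambda>x. \<Sum>b\<in>Basis. (f x \<bullet> b) *\<^sub>R b)"
    using assms by (intro Bochner_Integration.integrable_sum integrable_scaleR_left)
  then show ?thesis by (simp add: euclidean_representation)
qed

lemma integrable_matrix_entrywise:
  fixes F :: "'a \<Rightarrow> real^'n^'m"
  assumes "\<And>a b. integrable M (\<lambda>x. F x $ a $ b)"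
  shows "integrable M F"
proof (rule integrable_euclidean_componentwise)
  fix u :: "real^'n^'m"
  assume "u \<in> Basis"
  then obtain a c where "u = axis a (axis c 1)"
    by (auto simp: Basis_vec_def)
  then show "integrable M (\<lambda>x. F x \<bullet> u)"
    using assms by (simp add: inner_axis)
qed

lemma integral_matrix_entry:
  fixes F :: "'a \<Rightarrow> real^'n^'m"
  assumes "integrable M F"
  shows "(\<integral>x. F x \<partial>M) $ a $ b = (\<integral>x. F x $ a $ b \<partial>M)"
  using integral_bounded_linear[OF bounded_linear_compose[OF bounded_linear_vec_nth bounded_linear_vec_nth] assms]
  by simp

definition diag_mat :: "('d \<Rightarrow> real) \<Rightarrow> real^'d^'d::finite" where
  "diag_mat v = (\<chi> a b. if a = b then v a else 0)"

lemma diag_mat_nth [simp]: "diag_mat v $ a $ b = (if a = b then v a else 0)"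
  by (simp add: diag_mat_def)

lemma diag_mat_mult: "diag_mat v ** diag_mat w = diag_mat (\<lambda>a. v a * w a)"
proof -
  have "(\<Sum>c\<in>UNIV. (if a = c then v a else 0) * (if c = b then w c else 0))
      = (\<Sum>c\<in>UNIV. if c = a then (if a = b then v a * w a else 0) else 0)" for a b
    by (rule sum.cong) auto
  then show ?thesis by (simp add: vec_eq_iff matrix_matrix_mult_def diag_mat_def)
qed

lemma trace_diag_mat: "trace (diag_mat v) = sum v UNIV"
  by (simp add: trace_def diag_mat_def)

lemma diag_mat_eq_sum: "diag_mat v = (\<Sum>j\<in>UNIV. v j *\<^sub>R diag_mat (indicator {j}))"
  by (simp add: vec_eq_iff diag_mat_def indicator_def if_distrib if_distribR sum.delta cong: if_cong)

lemma sum_outer_eq_conj_diag_mat: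
  "(\<Sum>j\<in>UNIV. c j *\<^sub>R outer (u j)) = (\<chi> a j. u j $ a) ** diag_mat c ** transpose (\<chi> a j. u j $ a)"
proof -
  have "(\<Sum>i\<in>UNIV. u i $ a * (if i = e then c i else 0)) = (\<Sum>i\<in>UNIV. if i = e then u e $ a * c e else 0)"
    for a e
    by (rule sum.cong) auto
  then show ?thesis
    by (simp add: vec_eq_iff outer_def matrix_matrix_mult_def transpose_def diag_mat_def mult_ac)
qed

definition signed_perm_mat :: "('d \<Rightarrow> 'd) \<Rightarrow> ('d \<Rightarrow> real) \<Rightarrow> real^'d^'d::finite" where
  "signed_perm_mat \<pi> s = (\<chi> a c. if a = \<pi> c then s c else 0)"

lemma orthogonal_signed_perm_mat:
  assumes "bij \<pi>" "\<And>c. s c \<in> {-1, 1}"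
  shows "orthogonal_matrix (signed_perm_mat \<pi> s)"
proof -
  have inj: "\<pi> c = \<pi> c' \<longleftrightarrow> c = c'" for c c' using assms(1) by (simp add: bij_def inj_eq)
  have "(transpose (signed_perm_mat \<pi> s) ** signed_perm_mat \<pi> s) $ i $ j
      = (\<Sum>a\<in>UNIV. (if a = \<pi> i then s i else 0) * (if a = \<pi> j then s j else 0))" for i j
    by (simp add: matrix_matrix_mult_def transpose_def signed_perm_mat_def)
  also have "\<dots> i j = (\<Sum>a\<in>UNIV. if a = \<pi> i then (if i = j then s i * s j else 0) else 0)" for i j
    by (rule sum.cong) (auto simp: inj)
  also have "\<dots> i j = mat 1 $ i $ j" for i j
    using assms(2)[of i] by (auto simp: mat_def)
  finally show ?thesis by (simp add: orthogonal_matrix vec_eq_iff)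
qed

lemma signed_perm_mat_conj_entry:
  assumes "bij \<pi>"
  shows "(signed_perm_mat \<pi> s ** X ** transpose (signed_perm_mat \<pi> s)) $ \<pi> a $ \<pi> b = s a * s b * X $ a $ b"
proof -
  have inj: "\<pi> c = \<pi> c' \<longleftrightarrow> c = c'" for c c' using assms by (simp add: bij_def inj_eq)
  have "(signed_perm_mat \<pi> s ** X ** transpose (signed_perm_mat \<pi> s)) $ \<pi> a $ \<pi> b
      = (\<Sum>e\<in>UNIV. (\<Sum>c\<in>UNIV. (if c = a then s a else 0) * X $ c $ e) * (if e = b then s b else 0))"
    by (auto simp: matrix_matrix_mult_def transpose_def signed_perm_mat_def inj intro!: sum.cong)
  also have "\<dots> = (\<Sum>e\<in>UNIV. if e = b then s a * X $ a $ e * s b else 0)"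
    by (intro sum.cong refl) (simp add: if_distrib if_distribR sum.delta cong: if_cong)
  also have "\<dots> = s a * s b * X $ a $ b" by (simp add: sum.delta)
  finally show ?thesis .
qed

lemma signed_perm_mat_conj_diag:
  assumes "bij \<pi>" "\<And>c. s c \<in> {-1, 1}"
  shows "signed_perm_mat \<pi> s ** diag_mat v ** transpose (signed_perm_mat \<pi> s) = diag_mat (v \<circ> inv \<pi>)"
proof -
  have "s c * s c = 1" for c using assms(2)[of c] by auto
  moreover have "inv \<pi> (\<pi> a) = a" for a
    using assms(1) by (simp add: bij_is_inj)
  ultimately have "(signed_perm_mat \<pi> s ** diag_mat v ** transpose (signed_perm_mat \<pi> s)) $ \<pi> a $ \<pi> b
      = diag_mat (v \<circ> inv \<pi>) $ \<pi> a $ \<pi> b" for a b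
    using assms(1) by (simp add: signed_perm_mat_conj_entry diag_mat_def bij_def inj_eq)
  moreover have "\<pi> (inv \<pi> x) = x" for x
    using assms(1) by (simp add: bij_is_surj surj_f_inv_f)
  ultimately show ?thesis
    by (metis vec_eq_iff)
qed

definition trace_comb :: "real \<Rightarrow> real \<Rightarrow> real \<Rightarrow> real \<Rightarrow> real \<Rightarrow> real^'d^'d \<Rightarrow> real^'d^'d \<Rightarrow> real^'d::finite^'d"
  where "trace_comb \<beta>1 \<beta>2 \<beta>3 \<beta>4 \<beta>5 A B =
    \<beta>1 *\<^sub>R (A ** B) + \<beta>2 *\<^sub>R (trace A *\<^sub>R B) + \<beta>3 *\<^sub>R (trace B *\<^sub>R A)
    + \<beta>4 *\<^sub>R ((trace A * trace B) *\<^sub>R mat 1) + \<beta>5 *\<^sub>R (trace (A ** B) *\<^sub>R mat 1)"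

lemma trace_comb_conj:
  fixes Q :: "real^'d::finite^'d"
  assumes "orthogonal_matrix Q"
  shows "trace_comb \<beta>1 \<beta>2 \<beta>3 \<beta>4 \<beta>5 (Q ** A ** transpose Q) (Q ** B ** transpose Q)
       = Q ** trace_comb \<beta>1 \<beta>2 \<beta>3 \<beta>4 \<beta>5 A B ** transpose Q"
proof -
  interpret sandwich: bounded_linear "\<lambda>X :: real^'d^'d. Q ** X ** transpose Q"
    by (rule bounded_linear_matrix_sandwich)
  have QtQ: "transpose Q ** Q = mat 1" and QQt: "Q ** transpose Q = mat 1"
    using assms by (simp_all add: orthogonal_matrix_def)
  have mult: "(Q ** A ** transpose Q) ** (Q ** B ** transpose Q) = Q ** (A ** B) ** transpose Q"
    by (simp add: matrix_mul_assoc) (metis QtQ matrix_mul_assoc matrix_mul_rid)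
  have trace: "trace (Q ** X ** transpose Q) = trace X" for X :: "real^'d^'d"
    by (metis QtQ matrix_mul_assoc matrix_mul_lid trace_mul_sym)
  show ?thesis
    by (simp add: trace_comb_def sandwich.add sandwich.scaleR mult trace QQt)
qed

lemma trace_comb_diag_mat:
  "trace_comb \<beta>1 \<beta>2 \<beta>3 \<beta>4 \<beta>5 (diag_mat v) (diag_mat w) = diag_mat (\<lambda>a.
     \<beta>1 * (v a * w a) + \<beta>2 * (sum v UNIV * w a) + \<beta>3 * (sum w UNIV * v a)
     + \<beta>4 * (sum v UNIV * sum w UNIV) + \<beta>5 * (\<Sum>j\<in>UNIV. v j * w j))"
  by (simp add: vec_eq_iff trace_comb_def diag_mat_mult trace_diag_mat mat_def)

lemma double_sum_of_bool_pattern: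
  fixes v w :: "'a::finite \<Rightarrow> 'b::comm_ring_1"
  shows "(\<Sum>j\<in>UNIV. \<Sum>l\<in>UNIV. v j * w l * (\<beta>1 * of_bool (j = a) * of_bool (l = a) + \<beta>2 * of_bool (l = a)
            + \<beta>3 * of_bool (j = a) + \<beta>4 + \<beta>5 * of_bool (j = l)))
       = \<beta>1 * (v a * w a) + \<beta>2 * (sum v UNIV * w a) + \<beta>3 * (sum w UNIV * v a)
            + \<beta>4 * (sum v UNIV * sum w UNIV) + \<beta>5 * (\<Sum>j\<in>UNIV. v j * w j)"
proof -
  have "(\<Sum>j\<in>UNIV. \<Sum>l\<in>UNIV. v j * w l * of_bool (j = a) * of_bool (l = a))
      = (\<Sum>j\<in>UNIV. v j * of_bool (j = a)) * (\<Sum>l\<in>UNIV. w l * of_bool (l = a))"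
    unfolding sum_product by (simp only: mult_ac)
  then have both: "(\<Sum>j\<in>UNIV. \<Sum>l\<in>UNIV. v j * w l * of_bool (j = a) * of_bool (l = a)) = v a * w a"
    by simp
  have "(\<Sum>j\<in>UNIV. \<Sum>l\<in>UNIV. v j * w l * of_bool (j = a))
      = (\<Sum>j\<in>UNIV. v j * of_bool (j = a)) * sum w UNIV"
    unfolding sum_product by (simp only: mult_ac)
  then have first: "(\<Sum>j\<in>UNIV. \<Sum>l\<in>UNIV. v j * w l * of_bool (j = a)) = sum w UNIV * v a"
    by simp
  have second: "(\<Sum>j\<in>UNIV. \<Sum>l\<in>UNIV. v j * w l * of_bool (l = a)) = sum v UNIV * w a"
    by (simp add: sum_distrib_right)
  have none: "(\<Sum>j\<in>UNIV. \<Sum>l\<in>UNIV. v j * w l) = sum v UNIV * sum w UNIV"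
    by (simp add: sum_product)
  have equal: "(\<Sum>j\<in>UNIV. \<Sum>l\<in>UNIV. v j * w l * of_bool (j = l)) = (\<Sum>j\<in>UNIV. v j * w j)"
    by simp
  from both first second none equal show ?thesis
    by (simp add: algebra_simps sum.distrib flip: sum_distrib_left)
qed

section \<open>Gaussian linear forms\<close>

abbreviation std_gaussian :: "'i set \<Rightarrow> ('i \<Rightarrow> real) measure" where
  "std_gaussian I \<equiv> PiM I (\<lambda>_. std_normal_distribution)"

lemma prob_space_std_gaussian: "prob_space (std_gaussian I)"
  by (intro prob_space_PiM prob_space_normal_density) simp

lemma indep_vars_std_gaussian:
  assumes "I \<noteq> {}"
  shows "prob_space.indep_vars (std_gaussian I) (\<lambda>_. std_normal_distribution) (\<lambda>p \<omega>. \<omega> p) I"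
proof -
  interpret prob_space "std_gaussian I" by (rule prob_space_std_gaussian)
  have "distr (std_gaussian I) (std_gaussian I) (\<lambda>\<omega>. \<lambda>p\<in>I. \<omega> p) = distr (std_gaussian I) (std_gaussian I) (\<lambda>\<omega>. \<omega>)"
    by (rule distr_cong) (auto simp: space_PiM PiE_def extensional_def restrict_def fun_eq_iff)
  also have "\<dots> = std_gaussian I" by (rule distr_id)
  also have "\<dots> = PiM I (\<lambda>p. distr (std_gaussian I) std_normal_distribution (\<lambda>\<omega>. \<omega> p))"
    by (rule PiM_cong) (auto intro!: distr_PiM_component[symmetric] prob_space_normal_density)
  finally show ?thesis
    by (subst indep_vars_iff_distr_eq_PiM'[OF assms]) auto
qed

lemma distributed_std_gaussian_coordinate:
  assumes "p \<in> I"
  shows "distributed (std_gaussian I) lborel (\<lambda>\<omega>. \<omega> p) std_normal_density"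
proof -
  have "distr (std_gaussian I) lborel (\<lambda>\<omega>. \<omega> p) = distr (std_gaussian I) std_normal_distribution (\<lambda>\<omega>. \<omega> p)"
    by (rule distr_cong) auto
  also have "\<dots> = std_normal_distribution"
    using assms by (intro distr_PiM_component prob_space_normal_density) simp
  finally show ?thesis
    using assms by (auto simp: distributed_def intro!: measurable_component_singleton)
qed

definition lin_form :: "'i set \<Rightarrow> ('i \<Rightarrow> real) \<Rightarrow> ('i \<Rightarrow> real) \<Rightarrow> real" where
  "lin_form I c \<omega> = (\<Sum>p\<in>I. c p * \<omega> p)"

lemma lin_form_zero [simp]: "lin_form I (\<lambda>_. 0) \<omega> = 0"
  by (simp add: lin_form_def)

lemma lin_form_add: "lin_form I (\<lambda>p. a p + b p) \<omega> = lin_form I a \<omega> + lin_form I b \<omega>"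
  by (simp add: lin_form_def sum.distrib algebra_simps)

lemma distributed_lin_form:
  assumes "finite I" "\<exists>p\<in>I. c p \<noteq> 0"
  shows "distributed (std_gaussian I) lborel (lin_form I c)
           (normal_density 0 (sqrt (\<Sum>p\<in>I. (c p)\<^sup>2)))"
proof -
  interpret prob_space "std_gaussian I" by (rule prob_space_std_gaussian)
  define J where "J = {p\<in>I. c p \<noteq> 0}"
  have J: "J \<subseteq> I" "finite J" "J \<noteq> {}" using assms by (auto simp: J_def)
  then have "I \<noteq> {}" by blast
  have "lin_form I c = (\<lambda>\<omega>. \<Sum>p\<in>J. c p * \<omega> p)"
    using assms by (auto simp: lin_form_def J_def fun_eq_iff intro!: sum.mono_neutral_right)
  moreover have "(\<Sum>p\<in>I. (c p)\<^sup>2) = (\<Sum>p\<in>J. \<bar>c p\<bar>\<^sup>2)"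
    using assms by (auto simp: J_def intro!: sum.mono_neutral_right)
  moreover have "distributed (std_gaussian I) lborel (\<lambda>\<omega>. \<Sum>p\<in>J. c p * \<omega> p)
      (normal_density (\<Sum>p\<in>J. 0) (sqrt (\<Sum>p\<in>J. \<bar>c p\<bar>\<^sup>2)))"
  proof (rule sum_indep_normal)
    show "indep_vars (\<lambda>_. borel) (\<lambda>p \<omega>. c p * \<omega> p) J"
      using indep_vars_compose2[OF indep_vars_std_gaussian[OF \<open>I \<noteq> {}\<close>], of "\<lambda>p x. c p * x" "\<lambda>_. borel"] J
      by (auto intro: indep_vars_subset)
    show "distributed (std_gaussian I) lborel (\<lambda>\<omega>. c p * \<omega> p) (normal_density 0 \<bar>c p\<bar>)"
      if "p \<in> J" for p
      using normal_density_affine[OF distributed_std_gaussian_coordinate[of p I], where \<alpha>="c p" and \<beta>=0] that J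
      by (auto simp: J_def)
  qed (use J in \<open>auto simp: J_def\<close>)
  ultimately show ?thesis by simp
qed

definition normal_moment :: "nat \<Rightarrow> real \<Rightarrow> real" where
  "normal_moment m v = (if even m then v ^ (m div 2) * fact m / (2 ^ (m div 2) * fact (m div 2)) else 0)"

lemma has_bochner_integral_normal_moment:
  assumes "0 < \<sigma>"
  shows "has_bochner_integral lborel (\<lambda>x. normal_density 0 \<sigma> x * x ^ m) (normal_moment m (\<sigma>\<^sup>2))"
proof (cases "even m")
  case True
  then obtain k where m: "m = 2 * k" by auto
  have "normal_moment m (\<sigma>\<^sup>2) = fact (2 * k) / ((2 / \<sigma>\<^sup>2) ^ k * fact k)"
    using assms by (simp add: normal_moment_def m power_divide field_simps)
  then show ?thesis
    using normal_moment_even[where \<mu>=0 and \<sigma>=\<sigma> and k=k] assms by (simp add: m)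
next
  case False
  then obtain k where "m = 2 * k + 1" using oddE by blast
  then show ?thesis using normal_moment_odd[where \<mu>=0 and \<sigma>=\<sigma> and k=k] assms by (simp add: normal_moment_def)
qed

lemma lin_form_power_moment:
  assumes "finite I"
  shows "has_bochner_integral (std_gaussian I) (\<lambda>\<omega>. lin_form I c \<omega> ^ m)
           (normal_moment m (\<Sum>p\<in>I. (c p)\<^sup>2))"
proof (cases "\<exists>p\<in>I. c p \<noteq> 0")
  case True
  let ?\<sigma> = "sqrt (\<Sum>p\<in>I. (c p)\<^sup>2)"
  have "0 < ?\<sigma>"
    using True assms by (auto intro!: sum_pos2)
  then show ?thesis
    using has_bochner_integral_normal_moment[of ?\<sigma> m] distributed_lin_form[OF assms True]
    by (auto simp: has_bochner_integral_iff distributed_integrable distributed_integral sum_nonneg)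
next
  case False
  interpret prob_space "std_gaussian I" by (rule prob_space_std_gaussian)
  have "normal_moment m 0 = 0 ^ m" by (cases m) (auto simp: normal_moment_def)
  then show ?thesis using False
    by (simp add: lin_form_def has_bochner_integral_iff prob_space)
qed

section \<open>Polynomials in Gaussian coordinates\<close>

inductive lin_form_poly :: "'i set \<Rightarrow> (('i \<Rightarrow> real) \<Rightarrow> real) \<Rightarrow> bool" for I where
  monomial: "lin_form_poly I (\<lambda>\<omega>. a * (\<Prod>c\<leftarrow>cs. lin_form I c \<omega>))"
| add: "lin_form_poly I f \<Longrightarrow> lin_form_poly I g \<Longrightarrow> lin_form_poly I (\<lambda>\<omega>. f \<omega> + g \<omega>)"

lemma lin_form_poly_const: "lin_form_poly I (\<lambda>\<omega>. a)"
  using lin_form_poly.monomial[of I a "[]"] by simp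

lemma lin_form_poly_lin_form: "lin_form_poly I (lin_form I c)"
  using lin_form_poly.monomial[of I 1 "[c]"] by simp

lemma lin_form_poly_coordinate:
  assumes "finite I" "p \<in> I"
  shows "lin_form_poly I (\<lambda>\<omega>. \<omega> p)"
proof -
  have "lin_form I (\<lambda>q. of_bool (q = p)) = (\<lambda>\<omega>. \<omega> p)"
    using assms by (simp add: lin_form_def fun_eq_iff if_distrib sum.delta' cong: if_cong)
  then show ?thesis using lin_form_poly_lin_form by metis
qed

lemma lin_form_poly_mult:
  assumes "lin_form_poly I f" "lin_form_poly I g"
  shows "lin_form_poly I (\<lambda>\<omega>. f \<omega> * g \<omega>)"
  using assms
proof (induction f rule: lin_form_poly.induct)
  case (monomial a cs)
  from monomial.prems show ?case
  proof (induction g rule: lin_form_poly.induct)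
    case (monomial b ds)
    then show ?case
      using lin_form_poly.monomial[of I "a * b" "cs @ ds"] by (simp add: mult_ac)
  next
    case (add g h)
    then show ?case by (simp add: distrib_left lin_form_poly.add)
  qed
next
  case (add f h)
  then show ?case by (simp add: distrib_right lin_form_poly.add)
qed

lemma lin_form_poly_sum:
  assumes "\<And>k. k \<in> K \<Longrightarrow> lin_form_poly I (f k)"
  shows "lin_form_poly I (\<lambda>\<omega>. \<Sum>k\<in>K. f k \<omega>)"
  using assms
  by (induction K rule: infinite_finite_induct) (auto intro: lin_form_poly_const lin_form_poly.add)

lemma lin_form_poly_comp:
  assumes "lin_form_poly I f" "\<And>c \<omega>. lin_form I c (R \<omega>) = lin_form I (T c) \<omega>"
  shows "lin_form_poly I (\<lambda>\<omega>. f (R \<omega>))"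
  using assms(1)
proof (induction f rule: lin_form_poly.induct)
  case (monomial a cs)
  then show ?case
    using lin_form_poly.monomial[of I a "map T cs"] by (simp add: assms(2) o_def)
qed (simp add: lin_form_poly.add)

lemma fin_diff_lin_forms_Cons:
  "fin_diff (map (\<lambda>c. lin_form I c \<omega>) (c # cs)) f (lin_form I t \<omega>)
     = fin_diff (map (\<lambda>c. lin_form I c \<omega>) cs) f (lin_form I (\<lambda>p. t p + c p) \<omega>)
     - fin_diff (map (\<lambda>c. lin_form I c \<omega>) cs) f (lin_form I t \<omega>)"
  by (simp add: lin_form_add)

lemma integrable_fin_diff_lin_forms:
  assumes "finite I"
  shows "integrable (std_gaussian I) (\<lambda>\<omega>. fin_diff (map (\<lambda>c. lin_form I c \<omega>) cs) (\<lambda>x. x ^ q) (lin_form I t \<omega>))"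
proof (induction cs arbitrary: t)
  case Nil
  then show ?case
    using lin_form_power_moment[OF assms] by (auto simp: has_bochner_integral_iff)
next
  case (Cons c cs)
  then show ?case
    unfolding fin_diff_lin_forms_Cons by (intro Bochner_Integration.integrable_diff Cons.IH)
qed

lemma integral_fin_diff_lin_forms_comp:
  assumes "finite I"
    and R: "\<And>c \<omega>. lin_form I c (R \<omega>) = lin_form I (T c) \<omega>"
    and T: "\<And>c. (\<Sum>p\<in>I. (T c p)\<^sup>2) = (\<Sum>p\<in>I. (c p)\<^sup>2)"
  shows "(\<integral>\<omega>. fin_diff (map (\<lambda>c. lin_form I c (R \<omega>)) cs) (\<lambda>x. x ^ q) (lin_form I t (R \<omega>)) \<partial>std_gaussian I)
       = (\<integral>\<omega>. fin_diff (map (\<lambda>c. lin_form I c \<omega>) cs) (\<lambda>x. x ^ q) (lin_form I t \<omega>) \<partial>std_gaussian I)"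
proof (induction cs arbitrary: t)
  case Nil
  then show ?case
    using lin_form_power_moment[OF assms(1), of "T t" q] lin_form_power_moment[OF assms(1), of t q]
    by (simp add: R T has_bochner_integral_iff)
next
  case (Cons c cs)
  have "integrable (std_gaussian I)
          (\<lambda>\<omega>. fin_diff (map (\<lambda>c. lin_form I c (R \<omega>)) cs) (\<lambda>x. x ^ q) (lin_form I t (R \<omega>)))" for t
    using integrable_fin_diff_lin_forms[OF assms(1), of "map T cs" q "T t"] by (simp add: R o_def)
  then show ?case
    unfolding fin_diff_lin_forms_Cons
    by (simp add: integral_diff integrable_fin_diff_lin_forms[OF assms(1)] Cons.IH)
qed

lemma integrable_lin_form_poly:
  assumes "finite I" "lin_form_poly I f"
  shows "integrable (std_gaussian I) f"
  using assms(2)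
proof (induction f rule: lin_form_poly.induct)
  case (monomial a cs)
  show ?case
    using integrable_fin_diff_lin_forms[OF assms(1), of cs "length cs" "\<lambda>_. 0"]
    by (simp add: prod_list_eq_fin_diff_power o_def)
qed simp

lemma integral_lin_form_poly_comp:
  assumes "finite I" "lin_form_poly I f"
    and R: "\<And>c \<omega>. lin_form I c (R \<omega>) = lin_form I (T c) \<omega>"
    and T: "\<And>c. (\<Sum>p\<in>I. (T c p)\<^sup>2) = (\<Sum>p\<in>I. (c p)\<^sup>2)"
  shows "(\<integral>\<omega>. f (R \<omega>) \<partial>std_gaussian I) = (\<integral>\<omega>. f \<omega> \<partial>std_gaussian I)"
  using assms(2)
proof (induction f rule: lin_form_poly.induct)
  case (monomial a cs)
  show ?case
    using integral_fin_diff_lin_forms_comp[OF assms(1) R T, of cs "length cs" "\<lambda>_. 0"]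
    by (simp add: prod_list_eq_fin_diff_power o_def)
next
  case (add f g)
  have "integrable (std_gaussian I) (\<lambda>\<omega>. f (R \<omega>))" "integrable (std_gaussian I) (\<lambda>\<omega>. g (R \<omega>))"
    using add.hyps by (auto intro!: integrable_lin_form_poly[OF assms(1)] lin_form_poly_comp[OF _ R])
  with add show ?case
    by (simp add: integrable_lin_form_poly[OF assms(1)])
qed

section \<open>Rotating the sample\<close>

definition rotate_sample :: "real^'d^'d \<Rightarrow> ((nat \<times> 'd::finite) \<Rightarrow> real) \<Rightarrow> ((nat \<times> 'd) \<Rightarrow> real)" where
  "rotate_sample Q \<omega> = (\<lambda>(i, j). (Q *v sample_vec \<omega> i) $ j)"

definition rotate_coeffs :: "real^'d^'d \<Rightarrow> ((nat \<times> 'd::finite) \<Rightarrow> real) \<Rightarrow> ((nat \<times> 'd) \<Rightarrow> real)" where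
  "rotate_coeffs Q c = (\<lambda>(i, l). ((\<chi> j. c (i, j)) v* Q) $ l)"

lemma sample_vec_rotate_sample: "sample_vec (rotate_sample Q \<omega>) i = Q *v sample_vec \<omega> i"
  by (simp add: sample_vec_def rotate_sample_def)

lemma sample_cov_rotate_sample:
  "sample_cov n (rotate_sample Q \<omega>) = Q ** sample_cov n \<omega> ** transpose Q"
  by (simp add: sample_cov_def sample_vec_rotate_sample outer_matrix_vector_mult matrix_mult_sum_left
      matrix_mult_sum_right matrix_scalar_ac scalar_matrix_assoc[symmetric] scaleR_sum_right)

lemma lin_form_sample_coords:
  "lin_form ({..<n} \<times> UNIV) c \<omega> = (\<Sum>i<n. (\<chi> j. c (i, j)) \<bullet> sample_vec \<omega> i)"
  by (simp add: lin_form_def sum.cartesian_product' inner_vec_def sample_vec_def)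

lemma lin_form_rotate_sample:
  "lin_form ({..<n} \<times> UNIV) c (rotate_sample Q \<omega>) = lin_form ({..<n} \<times> UNIV) (rotate_coeffs Q c) \<omega>"
  by (simp add: lin_form_sample_coords sample_vec_rotate_sample dot_lmul_matrix[symmetric] rotate_coeffs_def)

lemma sum_squares_rotate_coeffs:
  assumes "orthogonal_matrix Q"
  shows "(\<Sum>p\<in>{..<n} \<times> UNIV. (rotate_coeffs Q c p)\<^sup>2) = (\<Sum>p\<in>{..<n} \<times> (UNIV :: 'd::finite set). (c p)\<^sup>2)"
proof -
  have "(\<Sum>l\<in>UNIV. (((\<chi> j. c (i, j)) v* Q) $ l)\<^sup>2) = (\<Sum>j\<in>UNIV. (c (i, j :: 'd))\<^sup>2)" for i
    using inner_vector_matrix_mult_orthogonal[OF assms, of "\<chi> j. c (i, j)"]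
    by (simp add: inner_vec_def power2_eq_square)
  then show ?thesis
    by (simp add: sum.cartesian_product' rotate_coeffs_def)
qed

lemma integral_rotate_sample:
  assumes "lin_form_poly ({..<n} \<times> UNIV) f" "orthogonal_matrix Q"
  shows "(\<integral>\<omega>. f (rotate_sample Q \<omega>) \<partial>gauss_sample n) = (\<integral>\<omega>. f \<omega> \<partial>gauss_sample n)"
  unfolding gauss_sample_def
  by (rule integral_lin_form_poly_comp[OF _ assms(1) lin_form_rotate_sample
        sum_squares_rotate_coeffs[OF assms(2)]]) simp

definition matrix_poly :: "nat \<Rightarrow> (((nat \<times> 'd::finite) \<Rightarrow> real) \<Rightarrow> real^'d^'d) \<Rightarrow> bool" where
  "matrix_poly n A \<longleftrightarrow> (\<forall>a b. lin_form_poly ({..<n} \<times> UNIV) (\<lambda>\<omega>. A \<omega> $ a $ b))"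

lemma matrix_poly_const: "matrix_poly n (\<lambda>\<omega>. C)"
  by (simp add: matrix_poly_def lin_form_poly_const)

lemma matrix_poly_mult: "matrix_poly n A \<Longrightarrow> matrix_poly n B \<Longrightarrow> matrix_poly n (\<lambda>\<omega>. A \<omega> ** B \<omega>)"
  unfolding matrix_poly_def matrix_matrix_mult_def
  by (auto intro!: lin_form_poly_sum lin_form_poly_mult)

lemma matrix_poly_mat_pow: "matrix_poly n A \<Longrightarrow> matrix_poly n (\<lambda>\<omega>. mat_pow (A \<omega>) k)"
  by (induction k) (auto intro: matrix_poly_mult matrix_poly_const)

lemma matrix_poly_sample_cov: "matrix_poly n (sample_cov n :: _ \<Rightarrow> real^'d::finite^'d)"
proof -
  have entry: "sample_cov n \<omega> $ a $ b = 1 / real n * (\<Sum>i<n. \<omega> (i, a) * \<omega> (i, b))" for \<omega> a b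
    by (simp add: sample_cov_def outer_def sample_vec_def)
  have "lin_form_poly ({..<n} \<times> (UNIV :: 'd set)) (\<lambda>\<omega>. 1 / real n * (\<Sum>i<n. \<omega> (i, a) * \<omega> (i, b)))" for a b
    by (intro lin_form_poly_mult lin_form_poly_const lin_form_poly_sum lin_form_poly_coordinate) auto
  then show ?thesis
    unfolding matrix_poly_def entry by blast
qed

lemma matrix_poly_comp_rotate_sample:
  assumes "matrix_poly n F"
  shows "matrix_poly n (\<lambda>\<omega>. F (rotate_sample Q \<omega>))"
  unfolding matrix_poly_def
proof (intro allI)
  fix a b
  show "lin_form_poly ({..<n} \<times> UNIV) (\<lambda>\<omega>. F (rotate_sample Q \<omega>) $ a $ b)"
    using assms lin_form_poly_comp[where f = "\<lambda>\<omega>. F \<omega> $ a $ b", OF _ lin_form_rotate_sample]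
    by (simp add: matrix_poly_def)
qed

lemma integrable_matrix_poly: "matrix_poly n F \<Longrightarrow> integrable (gauss_sample n) F"
  unfolding matrix_poly_def gauss_sample_def
  by (auto intro!: integrable_matrix_entrywise integrable_lin_form_poly)

lemma integral_matrix_poly_rotate_sample:
  assumes "matrix_poly n F" "orthogonal_matrix Q"
  shows "(\<integral>\<omega>. F (rotate_sample Q \<omega>) \<partial>gauss_sample n) = (\<integral>\<omega>. F \<omega> \<partial>gauss_sample n)"
proof -
  have "(\<integral>\<omega>. F (rotate_sample Q \<omega>) \<partial>gauss_sample n) $ a $ b = (\<integral>\<omega>. F \<omega> \<partial>gauss_sample n) $ a $ b"
    for a b
  proof -
    have "lin_form_poly ({..<n} \<times> UNIV) (\<lambda>\<omega>. F \<omega> $ a $ b)"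
      using assms(1) by (simp add: matrix_poly_def)
    then show ?thesis
      using integral_rotate_sample[OF _ assms(2)]
        integrable_matrix_poly[OF assms(1)]
        integrable_matrix_poly[OF matrix_poly_comp_rotate_sample[OF assms(1)]]
      by (simp add: integral_matrix_entry)
  qed
  then show ?thesis by (simp add: vec_eq_iff)
qed

section \<open>The moment matrix\<close>

definition cov_moment :: "nat \<Rightarrow> nat \<Rightarrow> nat \<Rightarrow> real^'d^'d \<Rightarrow> real^'d^'d \<Rightarrow> real^'d::finite^'d" where
  "cov_moment n k k' A B = (\<integral>\<omega>. sample_cov n \<omega> ** A ** mat_pow (sample_cov n \<omega>) k ** B
                                  ** mat_pow (sample_cov n \<omega>) k' \<partial>gauss_sample n)"

lemma matrix_poly_cov_product:
  "matrix_poly n (\<lambda>\<omega>. sample_cov n \<omega> ** A ** mat_pow (sample_cov n \<omega>) k ** B ** mat_pow (sample_cov n \<omega>) k')"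
  by (intro matrix_poly_mult matrix_poly_mat_pow matrix_poly_sample_cov matrix_poly_const)

lemma cov_moment_conj:
  assumes "orthogonal_matrix Q"
  shows "cov_moment n k k' (Q ** A ** transpose Q) (Q ** B ** transpose Q) = Q ** cov_moment n k k' A B ** transpose Q"
proof -
  let ?F = "\<lambda>A B \<omega>. sample_cov n \<omega> ** A ** mat_pow (sample_cov n \<omega>) k ** B ** mat_pow (sample_cov n \<omega>) k'"
  have QtQ: "X ** transpose Q ** Q = X" for X :: "real^'a^'a"
    using assms by (simp add: orthogonal_matrix_def flip: matrix_mul_assoc)
  have rotate: "?F (Q ** A ** transpose Q) (Q ** B ** transpose Q) (rotate_sample Q \<omega>) = Q ** ?F A B \<omega> ** transpose Q"
    for \<omega>
    by (simp add: sample_cov_rotate_sample mat_pow_conj[OF assms] matrix_mul_assoc QtQ)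
  have "cov_moment n k k' (Q ** A ** transpose Q) (Q ** B ** transpose Q)
      = (\<integral>\<omega>. ?F (Q ** A ** transpose Q) (Q ** B ** transpose Q) (rotate_sample Q \<omega>) \<partial>gauss_sample n)"
    unfolding cov_moment_def
    by (rule integral_matrix_poly_rotate_sample[OF matrix_poly_cov_product assms, symmetric])
  also have "\<dots> = (\<integral>\<omega>. Q ** ?F A B \<omega> ** transpose Q \<partial>gauss_sample n)"
    by (simp only: rotate)
  also have "\<dots> = Q ** cov_moment n k k' A B ** transpose Q"
    unfolding cov_moment_def
    by (rule integral_bounded_linear[OF bounded_linear_matrix_sandwich integrable_matrix_poly[OF matrix_poly_cov_product]])
  finally show ?thesis .
qed

lemma cov_moment_sum_left:
  "cov_moment n k k' (\<Sum>j\<in>J. c j *\<^sub>R A j) B = (\<Sum>j\<in>J. c j *\<^sub>R cov_moment n k k' (A j) B)"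
  unfolding cov_moment_def
  by (simp add: matrix_mult_sum_left matrix_mult_sum_right matrix_scalar_ac scalar_matrix_assoc[symmetric]
      integral_sum integrable_matrix_poly matrix_poly_cov_product)

lemma cov_moment_sum_right:
  "cov_moment n k k' A (\<Sum>j\<in>J. c j *\<^sub>R B j) = (\<Sum>j\<in>J. c j *\<^sub>R cov_moment n k k' A (B j))"
  unfolding cov_moment_def
  by (simp add: matrix_mult_sum_left matrix_mult_sum_right matrix_scalar_ac scalar_matrix_assoc[symmetric]
      integral_sum integrable_matrix_poly matrix_poly_cov_product)

lemma cov_moment_diag_signed_perm:
  fixes \<pi> :: "'d::finite \<Rightarrow> 'd"
  assumes "bij \<pi>" "\<And>c. s c \<in> {-1, 1}"
  shows "cov_moment n k k' (diag_mat (v \<circ> inv \<pi>)) (diag_mat (w \<circ> inv \<pi>)) $ \<pi> a $ \<pi> b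
       = s a * s b * cov_moment n k k' (diag_mat v) (diag_mat w) $ a $ b"
proof -
  have "orthogonal_matrix (signed_perm_mat \<pi> s)"
    using assms by (rule orthogonal_signed_perm_mat)
  from cov_moment_conj[OF this, of n k k' "diag_mat v" "diag_mat w"] show ?thesis
    by (simp add: signed_perm_mat_conj_diag[OF assms] signed_perm_mat_conj_entry[OF assms(1)])
qed

lemma cov_moment_diag_off_diagonal:
  assumes "a \<noteq> b"
  shows "cov_moment n k k' (diag_mat v) (diag_mat w) $ a $ b = 0"
  using cov_moment_diag_signed_perm[OF bij_id, of "\<lambda>c. if c = a then -1 else 1" n k k' v w a b] assms
  by simp

lemma cov_moment_diag_entry:
  "cov_moment n k k' (diag_mat v) (diag_mat w) $ a $ a
     = (\<Sum>j\<in>UNIV. \<Sum>l\<in>UNIV. v j * w l * cov_moment n k k' (diag_mat (indicator {j})) (diag_mat (indicator {l})) $ a $ a)"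
  by (subst (1 2) diag_mat_eq_sum)
     (simp add: cov_moment_sum_left cov_moment_sum_right sum_distrib_left mult_ac, rule sum.swap)

lemma cov_moment_diag_perm_invariant:
  fixes \<pi> :: "'d::finite \<Rightarrow> 'd"
  assumes "bij \<pi>"
  shows "cov_moment n k k' (diag_mat (indicator {\<pi> j})) (diag_mat (indicator {\<pi> l})) $ \<pi> a $ \<pi> a
       = cov_moment n k k' (diag_mat (indicator {j})) (diag_mat (indicator {l})) $ a $ a"
proof -
  have "indicator {x} \<circ> inv \<pi> = (indicator {\<pi> x} :: _ \<Rightarrow> real)" for x
    using assms by (auto simp: fun_eq_iff indicator_def bij_inv_eq_iff bij_is_inj)
  then show ?thesis
    using cov_moment_diag_signed_perm[OF assms, where s = "\<lambda>_. 1" and v = "indicator {j}"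
        and w = "indicator {l}" and a = a and b = a]
    by simp
qed

lemma cov_moment_diag_kernel:
  obtains \<beta>1 \<beta>2 \<beta>3 \<beta>4 \<beta>5 where "\<And>j l a :: 'd::finite.
    cov_moment n k k' (diag_mat (indicator {j})) (diag_mat (indicator {l})) $ a $ a
      = \<beta>1 * of_bool (j = a) * of_bool (l = a) + \<beta>2 * of_bool (l = a) + \<beta>3 * of_bool (j = a)
        + \<beta>4 + \<beta>5 * of_bool (j = l)"
proof -
  define T where "T j l a = cov_moment n k k' (diag_mat (indicator {j})) (diag_mat (indicator {l})) $ a $ a"
    for j l a :: 'd
  have "T (\<pi> j) (\<pi> l) (\<pi> a) = T j l a" if "bij \<pi>" for \<pi> j l a
    using cov_moment_diag_perm_invariant[OF that] by (simp add: T_def)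
  then obtain g where g: "\<And>j l a. T j l a = g (j = l) (l = a) (j = a)"
    using bij_invariant_depends_on_eq_pattern[of T] by blast
  \<comment> \<open>by transitivity of equality, \<open>(j = l, l = a, j = a)\<close> takes only five values\<close>
  define \<beta>4 where "\<beta>4 = g False False False"
  define \<beta>5 where "\<beta>5 = g True False False - \<beta>4"
  define \<beta>2 where "\<beta>2 = g False True False - \<beta>4"
  define \<beta>3 where "\<beta>3 = g False False True - \<beta>4"
  define \<beta>1 where "\<beta>1 = g True True True - \<beta>2 - \<beta>3 - \<beta>4 - \<beta>5"
  have "T j l a = \<beta>1 * of_bool (j = a) * of_bool (l = a) + \<beta>2 * of_bool (l = a) + \<beta>3 * of_bool (j = a)
      + \<beta>4 + \<beta>5 * of_bool (j = l)" for j l a :: 'd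
    by (cases "j = l"; cases "l = a"; cases "j = a")
       (simp_all add: g \<beta>1_def \<beta>2_def \<beta>3_def \<beta>4_def \<beta>5_def)
  then show ?thesis
    unfolding T_def by (rule that)
qed

lemma cov_moment_diag_mat:
  "\<exists>\<beta>1 \<beta>2 \<beta>3 \<beta>4 \<beta>5. \<forall>v w :: 'd::finite \<Rightarrow> real.
     cov_moment n k k' (diag_mat v) (diag_mat w) = trace_comb \<beta>1 \<beta>2 \<beta>3 \<beta>4 \<beta>5 (diag_mat v) (diag_mat w)"
proof -
  obtain \<beta>1 \<beta>2 \<beta>3 \<beta>4 \<beta>5 where kernel: "\<And>j l a :: 'd.
    cov_moment n k k' (diag_mat (indicator {j})) (diag_mat (indicator {l})) $ a $ a
      = \<beta>1 * of_bool (j = a) * of_bool (l = a) + \<beta>2 * of_bool (l = a) + \<beta>3 * of_bool (j = a)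
        + \<beta>4 + \<beta>5 * of_bool (j = l)"
    using cov_moment_diag_kernel[of n k k'] by blast
  have "cov_moment n k k' (diag_mat v) (diag_mat w) = trace_comb \<beta>1 \<beta>2 \<beta>3 \<beta>4 \<beta>5 (diag_mat v) (diag_mat w)"
    for v w :: "'d \<Rightarrow> real"
  proof -
    let ?entry = "\<lambda>a. \<Sum>j\<in>UNIV. \<Sum>l\<in>UNIV.
      v j * w l * cov_moment n k k' (diag_mat (indicator {j})) (diag_mat (indicator {l})) $ a $ a"
    have "cov_moment n k k' (diag_mat v) (diag_mat w) $ a $ b = diag_mat ?entry $ a $ b" for a b
      using cov_moment_diag_entry[of n k k' v w b]
      by (cases "a = b") (simp_all add: cov_moment_diag_off_diagonal)
    then have "cov_moment n k k' (diag_mat v) (diag_mat w) = diag_mat ?entry"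
      by (simp add: vec_eq_iff)
    also have "\<dots> = trace_comb \<beta>1 \<beta>2 \<beta>3 \<beta>4 \<beta>5 (diag_mat v) (diag_mat w)"
      by (simp only: kernel double_sum_of_bool_pattern trace_comb_diag_mat)
    finally show ?thesis .
  qed
  then show ?thesis by blast
qed

theorem lemmaD8:
  fixes n k k' :: nat
  assumes "n \<ge> 1"
  shows "\<exists>\<beta>1 \<beta>2 \<beta>3 \<beta>4 \<beta>5 :: real.
    \<forall>(u :: 'd::finite \<Rightarrow> real^'d) (lamL :: 'd \<Rightarrow> real) (lamG :: 'd \<Rightarrow> real).
      orthonormal_basis u \<longrightarrow>
      (let L = (\<Sum>j\<in>UNIV. lamL j *\<^sub>R outer (u j));
           G = (\<Sum>j\<in>UNIV. lamG j *\<^sub>R outer (u j));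
           F = (\<lambda>\<omega>. sample_cov n \<omega> ** L ** mat_pow (sample_cov n \<omega>) k ** G
                     ** mat_pow (sample_cov n \<omega>) k')
       in integrable (gauss_sample n) F \<and>
          (\<integral>\<omega>. F \<omega> \<partial>gauss_sample n) =
            \<beta>1 *\<^sub>R (L ** G) + \<beta>2 *\<^sub>R (trace L *\<^sub>R G) + \<beta>3 *\<^sub>R (trace G *\<^sub>R L)
            + \<beta>4 *\<^sub>R ((trace L * trace G) *\<^sub>R mat 1) + \<beta>5 *\<^sub>R (trace (L ** G) *\<^sub>R mat 1))"
proof -
  obtain \<beta>1 \<beta>2 \<beta>3 \<beta>4 \<beta>5 where diag: "\<And>v w :: 'd \<Rightarrow> real.
      cov_moment n k k' (diag_mat v) (diag_mat w) = trace_comb \<beta>1 \<beta>2 \<beta>3 \<beta>4 \<beta>5 (diag_mat v) (diag_mat w)"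
    using cov_moment_diag_mat by blast
  have "cov_moment n k k' (\<Sum>j\<in>UNIV. lamL j *\<^sub>R outer (u j)) (\<Sum>j\<in>UNIV. lamG j *\<^sub>R outer (u j))
      = trace_comb \<beta>1 \<beta>2 \<beta>3 \<beta>4 \<beta>5 (\<Sum>j\<in>UNIV. lamL j *\<^sub>R outer (u j)) (\<Sum>j\<in>UNIV. lamG j *\<^sub>R outer (u j))"
    if "orthonormal_basis u" for u :: "'d \<Rightarrow> real^'d" and lamL lamG
    using orthogonal_matrix_of_orthonormal_basis[OF that]
    by (simp add: sum_outer_eq_conj_diag_mat cov_moment_conj trace_comb_conj diag)
  then show ?thesis
    unfolding Let_def cov_moment_def trace_comb_def
    by (blast intro: integrable_matrix_poly matrix_poly_cov_product)
qed

end
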